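(* Suppose the sensor messages are binary ($l=2$) and the densities $f_0,\dots,f_{M-1}$ are linearly independent. Then $Q_\alpha=Q_U$, i.e., the set of extreme points of $\bar Q$ coincides with the set of distribution vectors of ULQs.
   Context: A raw observation $X$ has density $f_m$ under state $m\in\{0,\dots,M-1\}$ (probability $\mathbf P_m$) with respect to a common $\sigma$-finite measure. Deterministic quantizers are measurable maps $\phi$ to $\{0,1\}$ (set $\Phi$); a randomized quantizer $\bar\phi=\sum_jp^j\phi^j$ is a probability distribution on a countable subset of $\Phi$; $\bar\Phi$ is the set of all quantizers. The distribution vector of $\bar\phi\in\bar\Phi$ is $q(\bar\phi)=(\mathbf P_m(\bar\phi(X)=i))_{0\le i\le l-1,\,0\le m\le M-1}\in\mathbb R^{Ml}$ (for randomized $\bar\phi$, $\mathbf P_m(\bar\phi(X)=i)=\sum_jp^j\mathbf P_m(\phi^j(X)=i)$). Let $Q=\{q(\phi):\phi\in\Phi\}$, $\bar Q=\{q(\bar\phi):\bar\phi\in\bar\Phi\}$ (which is the compact convex hull of the compact set $Q$), $Q_U=\{q(\phi):\phi\text{ a ULQ}\}$, and $Q_\alpha$ the set of extreme points of $\bar Q$. A deterministic quantizer $\phi$ is a ULQ if $\phi(X)=\mathbf 1\{\sum_ma_mf_m(X)>0\}$ for reals $a_0,\dots,a_{M-1}$ with $\mathbf P_{m'}\{\sum_ma_mf_m(X)=0\}=0$ for all $m'$. The densities are linearly independent if $\mathbf P_{m'}\{\sum_ma_mf_m(X)=0\}=0$ for every $m'$ and every $(a_m)$ not all zero. *)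

theory Defs
  imports "HOL-Analysis.Analysis"
begin

text \<open>States are indexed by a finite type 'm (M = CARD('m)); binary messages (l = 2)
  are encoded by bool (False = 0, True = 1). Distribution vectors live in
  real^('m \<times> bool), i.e. R^{Ml}.\<close>

definition prob_st :: "'a measure \<Rightarrow> ('m \<Rightarrow> 'a \<Rightarrow> real) \<Rightarrow> 'm \<Rightarrow> 'a set \<Rightarrow> real" where
  "prob_st N f m A = measure (density N (\<lambda>x. ennreal (f m x))) A"

definition det_quantizer :: "'a measure \<Rightarrow> ('a \<Rightarrow> bool) \<Rightarrow> bool" where
  "det_quantizer N \<phi> \<longleftrightarrow> \<phi> \<in> N \<rightarrow>\<^sub>M count_space UNIV"

definition dist_vec :: "'a measure \<Rightarrow> ('m::finite \<Rightarrow> 'a \<Rightarrow> real) \<Rightarrow> ('a \<Rightarrow> bool)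
    \<Rightarrow> real ^ ('m \<times> bool)" where
  "dist_vec N f \<phi> = (\<chi> k. prob_st N f (fst k) {x \<in> space N. \<phi> x = snd k})"

definition rand_quantizer :: "'a measure \<Rightarrow> (nat \<Rightarrow> real) \<Rightarrow> (nat \<Rightarrow> 'a \<Rightarrow> bool) \<Rightarrow> bool" where
  "rand_quantizer N p phis \<longleftrightarrow> (\<forall>j. p j \<ge> 0) \<and> p sums 1 \<and> (\<forall>j. det_quantizer N (phis j))"

definition rdist_vec :: "'a measure \<Rightarrow> ('m::finite \<Rightarrow> 'a \<Rightarrow> real) \<Rightarrow> (nat \<Rightarrow> real)
    \<Rightarrow> (nat \<Rightarrow> 'a \<Rightarrow> bool) \<Rightarrow> real ^ ('m \<times> bool)" where
  "rdist_vec N f p phis =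
     (\<chi> k. \<Sum>j. p j * prob_st N f (fst k) {x \<in> space N. phis j x = snd k})"

definition Qbar :: "'a measure \<Rightarrow> ('m::finite \<Rightarrow> 'a \<Rightarrow> real) \<Rightarrow> (real ^ ('m \<times> bool)) set" where
  "Qbar N f = {rdist_vec N f p phis | p phis. rand_quantizer N p phis}"

definition is_ULQ :: "'a measure \<Rightarrow> ('m::finite \<Rightarrow> 'a \<Rightarrow> real) \<Rightarrow> ('a \<Rightarrow> bool) \<Rightarrow> bool" where
  "is_ULQ N f \<phi> \<longleftrightarrow> det_quantizer N \<phi> \<and>
     (\<exists>a :: 'm \<Rightarrow> real.
        (\<forall>x \<in> space N. \<phi> x = ((\<Sum>m\<in>UNIV. a m * f m x) > 0)) \<and>
        (\<forall>m'. prob_st N f m' {x \<in> space N. (\<Sum>m\<in>UNIV. a m * f m x) = 0} = 0))"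

definition Q_U :: "'a measure \<Rightarrow> ('m::finite \<Rightarrow> 'a \<Rightarrow> real) \<Rightarrow> (real ^ ('m \<times> bool)) set" where
  "Q_U N f = {dist_vec N f \<phi> | \<phi>. is_ULQ N f \<phi>}"

definition Q_alpha :: "'a measure \<Rightarrow> ('m::finite \<Rightarrow> 'a \<Rightarrow> real) \<Rightarrow> (real ^ ('m \<times> bool)) set" where
  "Q_alpha N f = {v. v extreme_point_of Qbar N f}"

definition lin_indep_dens :: "'a measure \<Rightarrow> ('m::finite \<Rightarrow> 'a \<Rightarrow> real) \<Rightarrow> bool" where
  "lin_indep_dens N f \<longleftrightarrow> (\<forall>a :: 'm \<Rightarrow> real. a \<noteq> (\<lambda>_. 0) \<longrightarrow>
     (\<forall>m'. prob_st N f m' {x \<in> space N. (\<Sum>m\<in>UNIV. a m * f m x) = 0} = 0))"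

end

theory Submission imports Defs begin

(* For weights a :: 'm => real put g_a = sum_m a_m f_m and let the threshold quantizer be
   phi_a(x) = [g_a(x) > 0].  The linear functional u |-> sum_m a_m u(m,1) evaluated at the
   distribution vector of a deterministic quantizer psi equals the integral of g_a over
   {psi = 1}; it is therefore maximal for psi = phi_a, and a maximiser agrees with phi_a
   off {g_a = 0}.  If that set is null under every P_m, every maximiser -- deterministic or,
   by summing the series defining a randomized quantizer, randomized -- has the distribution
   vector of phi_a.
   - A ULQ is such a threshold quantizer, hence its vector is the unique maximiser of a
     linear functional on Qbar, i.e. an exposed and in particular an extreme point.
   - Conversely, an extreme point v of the convex set Qbar (which is not a singleton) lies on
     a non-trivial supporting hyperplane.  Since u(m,0) = 1 - u(m,1) on Qbar, this hyperplane
     is of the above form for some a <> 0, linear independence makes {g_a = 0} null, and so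
     v is the vector of the ULQ phi_a. *)

text \<open>Interleaving two convergent series gives a series converging to the sum of the limits;
  this realises convex combinations of randomized quantizers.\<close>
lemma interleave_sums:
  fixes F H :: "nat \<Rightarrow> 'a::real_normed_vector"
  assumes "F sums a" "H sums b"
  shows "(\<lambda>j. if even j then F (j div 2) else H (j div 2)) sums (a + b)"
proof -
  define E where "E j = (if even j then F (j div 2) else 0)" for j
  define D where "D j = (if even j then 0 else H (j div 2))" for j
  have "E sums a"
  proof (subst sums_mono_reindex[of "\<lambda>n. 2 * n", symmetric])
    show "strict_mono (\<lambda>n::nat. 2 * n)" by (auto simp: strict_mono_def)
    show "E n = 0" if "n \<notin> range (\<lambda>n. 2 * n)" for n
      using that by (auto simp: E_def elim!: evenE)
    show "(\<lambda>n. E (2 * n)) sums a" using assms(1) by (simp add: E_def)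
  qed
  moreover have "D sums b"
  proof (subst sums_mono_reindex[of "\<lambda>n. 2 * n + 1", symmetric])
    show "strict_mono (\<lambda>n::nat. 2 * n + 1)" by (auto simp: strict_mono_def)
    show "D n = 0" if "n \<notin> range (\<lambda>n. 2 * n + 1)" for n
      using that by (auto simp: D_def elim!: oddE)
    show "(\<lambda>n. D (2 * n + 1)) sums b" using assms(2) by (simp add: D_def)
  qed
  ultimately have "(\<lambda>j. E j + D j) sums (a + b)" by (rule sums_add)
  then show ?thesis by (simp add: E_def D_def if_distrib cong: if_cong)
qed

lemma extreme_point_nonconstant_support:
  fixes S :: "'a::euclidean_space set"
  assumes "convex S" and v: "v extreme_point_of S" and "S \<noteq> {v}"
  obtains c where "\<And>y. y \<in> S \<Longrightarrow> c \<bullet> y \<le> c \<bullet> v" and "\<exists>y\<in>S. c \<bullet> y < c \<bullet> v"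
proof -
  have "v \<in> S" using v by (simp add: extreme_point_of_def)
  moreover have "v \<notin> rel_interior S"
    using extreme_point_not_in_REL_INTERIOR[OF v \<open>S \<noteq> {v}\<close>] .
  ultimately obtain c where le: "\<And>y. y \<in> S \<Longrightarrow> c \<bullet> v \<le> c \<bullet> y"
    and less: "\<And>y. y \<in> rel_interior S \<Longrightarrow> c \<bullet> v < c \<bullet> y"
    using supporting_hyperplane_rel_boundary[OF \<open>convex S\<close>] by metis
  obtain y where "y \<in> rel_interior S"
    using rel_interior_eq_empty[OF \<open>convex S\<close>] \<open>v \<in> S\<close> by blast
  then have "\<exists>y\<in>S. (- c) \<bullet> y < (- c) \<bullet> v"
    using less rel_interior_subset by fastforce
  moreover have "\<And>y. y \<in> S \<Longrightarrow> (- c) \<bullet> y \<le> (- c) \<bullet> v" using le by simp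
  ultimately show ?thesis using that by blast
qed

lemma inner_vec_pairs:
  fixes c u :: "real ^ ('m::finite \<times> 'b::finite)"
  shows "c \<bullet> u = (\<Sum>m\<in>UNIV. \<Sum>b\<in>UNIV. c $ (m, b) * u $ (m, b))"
proof -
  have "c \<bullet> u = (\<Sum>k\<in>UNIV \<times> UNIV. c $ k * u $ k)" by (simp add: inner_vec_def)
  then show ?thesis by (simp add: sum.cartesian_product)
qed

locale density_model =
  fixes N :: "'a measure" and f :: "'m::finite \<Rightarrow> 'a \<Rightarrow> real"
  assumes f_measurable[measurable]: "\<And>m. f m \<in> borel_measurable N"
    and f_nonneg: "\<And>m x. x \<in> space N \<Longrightarrow> f m x \<ge> 0"
    and f_normalized: "\<And>m. (\<integral>\<^sup>+ x. ennreal (f m x) \<partial>N) = 1"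
begin

definition region :: "('a \<Rightarrow> bool) \<Rightarrow> bool \<Rightarrow> 'a set" where
  "region \<psi> b = {x \<in> space N. \<psi> x = b}"

abbreviation P :: "'m \<Rightarrow> ('a \<Rightarrow> bool) \<Rightarrow> bool \<Rightarrow> real" where
  "P m \<psi> b \<equiv> prob_st N f m (region \<psi> b)"

lemma f_integrable: "integrable N (f m)"
proof -
  have "(\<integral>\<^sup>+ x. ennreal (norm (f m x)) \<partial>N) = (\<integral>\<^sup>+ x. ennreal (f m x) \<partial>N)"
    by (intro nn_integral_cong) (simp add: f_nonneg)
  then show ?thesis using f_normalized[of m] by (intro integrableI_bounded) auto
qed

lemma f_integral: "integral\<^sup>L N (f m) = 1"
proof -
  have "ennreal (integral\<^sup>L N (f m)) = 1"
    using nn_integral_eq_integral[OF f_integrable, of m] f_normalized[of m] f_nonneg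
    by (metis AE_I2)
  then show ?thesis by simp
qed

lemma indicator_f_integrable: "A \<in> sets N \<Longrightarrow> integrable N (\<lambda>x. indicator A x * f m x)"
  using integrable_mult_indicator[OF _ f_integrable[of m]] by simp

lemma prob_st_integral:
  assumes A: "A \<in> sets N"
  shows "prob_st N f m A = (\<integral>x. indicator A x * f m x \<partial>N)"
proof -
  have "emeasure (density N (\<lambda>x. ennreal (f m x))) A
      = (\<integral>\<^sup>+ x. ennreal (f m x) * indicator A x \<partial>N)"
    using A by (simp add: emeasure_density)
  also have "\<dots> = (\<integral>\<^sup>+ x. ennreal (indicator A x * f m x) \<partial>N)"
    by (intro nn_integral_cong) (auto split: split_indicator)
  also have "\<dots> = ennreal (\<integral>x. indicator A x * f m x \<partial>N)"
    using indicator_f_integrable[OF A] f_nonneg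
    by (intro nn_integral_eq_integral) (auto split: split_indicator)
  finally show ?thesis unfolding prob_st_def measure_def
    by (simp add: integral_nonneg_AE f_nonneg split: split_indicator)
qed

lemma region_sets: "det_quantizer N \<psi> \<Longrightarrow> region \<psi> b \<in> sets N"
proof -
  assume "det_quantizer N \<psi>"
  then have "\<psi> -` {b} \<inter> space N \<in> sets N"
    unfolding det_quantizer_def by (intro measurable_sets) auto
  moreover have "\<psi> -` {b} \<inter> space N = region \<psi> b" by (auto simp: region_def)
  ultimately show ?thesis by simp
qed

lemma P_nonneg: "det_quantizer N \<psi> \<Longrightarrow> P m \<psi> b \<ge> 0"
  by (simp add: prob_st_integral region_sets integral_nonneg_AE f_nonneg split: split_indicator)

lemma P_complement:
  assumes "det_quantizer N \<psi>"
  shows "P m \<psi> True + P m \<psi> False = 1"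
proof -
  have sets: "region \<psi> b \<in> sets N" for b using region_sets[OF assms] .
  have "P m \<psi> True + P m \<psi> False
      = (\<integral>x. indicator (region \<psi> True) x * f m x + indicator (region \<psi> False) x * f m x \<partial>N)"
    using sets by (simp add: prob_st_integral indicator_f_integrable)
  also have "\<dots> = integral\<^sup>L N (f m)"
    by (intro Bochner_Integration.integral_cong) (auto simp: region_def split: split_indicator)
  finally show ?thesis using f_integral by simp
qed

lemma P_le_1:
  assumes "det_quantizer N \<psi>"
  shows "P m \<psi> b \<le> 1"
  using P_complement[OF assms, of m] P_nonneg[OF assms, of m True] P_nonneg[OF assms, of m False]
  by (cases b) simp_all

lemma dist_vec_nth: "dist_vec N f \<psi> $ (m, b) = P m \<psi> b"
  by (simp add: dist_vec_def region_def)

lemma dist_vec_cong: "(\<And>x. x \<in> space N \<Longrightarrow> \<phi> x = \<psi> x) \<Longrightarrow> dist_vec N f \<phi> = dist_vec N f \<psi>"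
proof -
  assume "\<And>x. x \<in> space N \<Longrightarrow> \<phi> x = \<psi> x"
  then have "region \<phi> b = region \<psi> b" for b by (auto simp: region_def)
  then show ?thesis by (simp add: vec_eq_iff dist_vec_nth)
qed

lemma rdist_sums:
  assumes rq: "rand_quantizer N p phis"
  shows "(\<lambda>j. p j *\<^sub>R dist_vec N f (phis j)) sums rdist_vec N f p phis"
proof -
  have p0: "p j \<ge> 0" and dq: "det_quantizer N (phis j)" and ps: "p sums 1" for j
    using rq by (auto simp: rand_quantizer_def)
  have "(\<lambda>j. p j * P m (phis j) b) sums (rdist_vec N f p phis $ (m, b))" for m b
  proof -
    have "summable (\<lambda>j. p j * P m (phis j) b)"
    proof (rule summable_comparison_test)
      show "\<exists>N0. \<forall>n\<ge>N0. norm (p n * P m (phis n) b) \<le> p n"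
        using p0 P_nonneg[OF dq] P_le_1[OF dq] by (auto simp: abs_mult intro!: mult_left_le)
      show "summable p" using ps by (rule sums_summable)
    qed
    then show ?thesis by (simp add: rdist_vec_def region_def summable_sums)
  qed
  then show ?thesis
    unfolding sums_def by (intro vec_tendstoI) (force simp: sums_def dist_vec_nth)
qed

lemma Qbar_eq: "Qbar N f = {u. \<exists>p phis. rand_quantizer N p phis \<and>
                  (\<lambda>j. p j *\<^sub>R dist_vec N f (phis j)) sums u}"
  unfolding Qbar_def using rdist_sums sums_unique2 by blast

text \<open>A deterministic quantizer is the randomized quantizer concentrated on itself.\<close>
lemma dist_vec_in_Qbar:
  assumes "det_quantizer N \<psi>"
  shows "dist_vec N f \<psi> \<in> Qbar N f"
proof -
  let ?p = "\<lambda>j::nat. if j = 0 then (1::real) else 0"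
  have "rand_quantizer N ?p (\<lambda>_. \<psi>)"
    using assms sums_single[of 0 "\<lambda>_. 1::real"] by (auto simp: rand_quantizer_def)
  moreover have "(\<lambda>j. ?p j *\<^sub>R dist_vec N f \<psi>) sums dist_vec N f \<psi>"
  proof -
    have "(\<lambda>j. ?p j *\<^sub>R dist_vec N f \<psi>) = (\<lambda>j. if j = 0 then dist_vec N f \<psi> else 0)"
      by auto
    then show ?thesis using sums_single[of 0 "\<lambda>_. dist_vec N f \<psi>"] by simp
  qed
  ultimately show ?thesis unfolding Qbar_eq by blast
qed

text \<open>Mixing two randomized quantizers is again a randomized quantizer.\<close>
lemma Qbar_convex: "convex (Qbar N f)"
proof (unfold convex_def, intro ballI allI impI)
  fix x y and s t :: real
  assume "x \<in> Qbar N f" "y \<in> Qbar N f" and st: "0 \<le> s" "0 \<le> t" "s + t = 1"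
  then obtain p1 phis1 p2 phis2 where rq1: "rand_quantizer N p1 phis1"
    and x: "(\<lambda>j. p1 j *\<^sub>R dist_vec N f (phis1 j)) sums x"
    and rq2: "rand_quantizer N p2 phis2"
    and y: "(\<lambda>j. p2 j *\<^sub>R dist_vec N f (phis2 j)) sums y"
    unfolding Qbar_eq by blast
  define p where "p j = (if even j then s * p1 (j div 2) else t * p2 (j div 2))" for j
  define phis where "phis j = (if even j then phis1 (j div 2) else phis2 (j div 2))" for j
  have "p sums (s * 1 + t * 1)"
    unfolding p_def using rq1 rq2
    by (intro interleave_sums sums_mult) (auto simp: rand_quantizer_def)
  then have "rand_quantizer N p phis"
    using rq1 rq2 st by (auto simp: rand_quantizer_def p_def phis_def)
  moreover have "(\<lambda>j. p j *\<^sub>R dist_vec N f (phis j)) sums (s *\<^sub>R x + t *\<^sub>R y)"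
    using interleave_sums[OF sums_scaleR_right[OF x, of s] sums_scaleR_right[OF y, of t]]
    by (simp add: p_def phis_def if_distrib cong: if_cong)
  ultimately show "s *\<^sub>R x + t *\<^sub>R y \<in> Qbar N f" unfolding Qbar_eq by blast
qed

lemma Qbar_complement:
  assumes "u \<in> Qbar N f"
  shows "u $ (m, False) = 1 - u $ (m, True)"
proof -
  obtain p phis where rq: "rand_quantizer N p phis"
    and u: "(\<lambda>j. p j *\<^sub>R dist_vec N f (phis j)) sums u"
    using assms unfolding Qbar_eq by blast
  have "(\<lambda>j. p j * P m (phis j) True + p j * P m (phis j) False) sums
        (u $ (m, True) + u $ (m, False))"
    using sums_add[OF sums_vec_nth[OF u, of "(m, True)"] sums_vec_nth[OF u, of "(m, False)"]]
    by (simp add: dist_vec_nth)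
  moreover have "(\<lambda>j. p j * P m (phis j) True + p j * P m (phis j) False) = p"
    using rq P_complement by (auto simp: rand_quantizer_def distrib_left[symmetric])
  ultimately show ?thesis using rq sums_unique2 by (fastforce simp: rand_quantizer_def)
qed

text \<open>The constant quantizers have different vectors, so Qbar is not a singleton.\<close>
lemma Qbar_not_singleton: "Qbar N f \<noteq> {v}"
proof
  assume Qv: "Qbar N f = {v}"
  have det: "det_quantizer N (\<lambda>_. c)" for c by (simp add: det_quantizer_def)
  have "region (\<lambda>_. True) False = {}" "region (\<lambda>_. False) True = {}" by (auto simp: region_def)
  then have "P m (\<lambda>_. True) False = 0" "P m (\<lambda>_. False) True = 0" for m
    by (simp_all add: prob_st_def)
  then have "P m (\<lambda>_. True) True = 1" "P m (\<lambda>_. False) True = 0" for m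
    using P_complement[OF det[of True], of m] by simp_all
  moreover have "dist_vec N f (\<lambda>_. True) = dist_vec N f (\<lambda>_. False)"
    using dist_vec_in_Qbar[OF det[of True]] dist_vec_in_Qbar[OF det[of False]] Qv by simp
  ultimately show False by (metis dist_vec_nth zero_neq_one)
qed

definition lincomb :: "('m \<Rightarrow> real) \<Rightarrow> 'a \<Rightarrow> real" where
  "lincomb a x = (\<Sum>m\<in>UNIV. a m * f m x)"

definition threshold :: "('m \<Rightarrow> real) \<Rightarrow> 'a \<Rightarrow> bool" where
  "threshold a x \<longleftrightarrow> lincomb a x > 0"

definition ties_null :: "('m \<Rightarrow> real) \<Rightarrow> bool" where
  "ties_null a \<longleftrightarrow> (\<forall>m. prob_st N f m {x \<in> space N. lincomb a x = 0} = 0)"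

lemma lincomb_measurable[measurable]: "lincomb a \<in> borel_measurable N"
  unfolding lincomb_def by measurable

lemma threshold_det: "det_quantizer N (threshold a)"
  unfolding det_quantizer_def threshold_def pred_def[symmetric] by measurable

lemma is_ULQ_iff: "is_ULQ N f \<phi> \<longleftrightarrow> det_quantizer N \<phi> \<and>
    (\<exists>a. (\<forall>x\<in>space N. \<phi> x = threshold a x) \<and> ties_null a)"
  by (simp add: is_ULQ_def threshold_def ties_null_def lincomb_def)

lemma lin_indep_ties_null: "lin_indep_dens N f \<Longrightarrow> a \<noteq> (\<lambda>_. 0) \<Longrightarrow> ties_null a"
  by (simp add: lin_indep_dens_def ties_null_def lincomb_def)

definition weight :: "('m \<Rightarrow> real) \<Rightarrow> real ^ ('m \<times> bool)" where
  "weight a = (\<chi> k. if snd k then a (fst k) else 0)"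

lemma inner_weight: "weight a \<bullet> u = (\<Sum>m\<in>UNIV. a m * u $ (m, True))"
  by (simp add: inner_vec_pairs weight_def UNIV_bool)

lemma score_integral:
  assumes "A \<in> sets N"
  shows "integrable N (\<lambda>x. indicator A x * lincomb a x)"
    and "(\<Sum>m\<in>UNIV. a m * prob_st N f m A) = (\<integral>x. indicator A x * lincomb a x \<partial>N)"
proof -
  have eq: "(\<lambda>x. \<Sum>m\<in>UNIV. a m * (indicator A x * f m x)) = (\<lambda>x. indicator A x * lincomb a x)"
    by (auto simp: lincomb_def sum_distrib_left algebra_simps)
  have int: "integrable N (\<lambda>x. \<Sum>m\<in>UNIV. a m * (indicator A x * f m x))"
    using indicator_f_integrable[OF assms] by auto
  then show "integrable N (\<lambda>x. indicator A x * lincomb a x)" by (simp add: eq)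
  have "(\<Sum>m\<in>UNIV. a m * prob_st N f m A) = (\<integral>x. (\<Sum>m\<in>UNIV. a m * (indicator A x * f m x)) \<partial>N)"
    using indicator_f_integrable[OF assms]
    by (simp add: prob_st_integral[OF assms] Bochner_Integration.integral_sum)
  then show "(\<Sum>m\<in>UNIV. a m * prob_st N f m A) = (\<integral>x. indicator A x * lincomb a x \<partial>N)"
    by (simp add: eq)
qed

definition deficit :: "('m \<Rightarrow> real) \<Rightarrow> ('a \<Rightarrow> bool) \<Rightarrow> 'a \<Rightarrow> real" where
  "deficit a \<psi> x = indicator (region (threshold a) True) x * lincomb a x
                    - indicator (region \<psi> True) x * lincomb a x"

lemma deficit_pointwise:
  assumes "x \<in> space N"
  shows "deficit a \<psi> x \<ge> 0"
    and "deficit a \<psi> x = 0 \<Longrightarrow> lincomb a x \<noteq> 0 \<Longrightarrow> \<psi> x = threshold a x"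
proof -
  have eq: "deficit a \<psi> x = (if lincomb a x > 0 then lincomb a x else 0)
                             - (if \<psi> x then lincomb a x else 0)"
    using assms by (simp add: deficit_def region_def threshold_def)
  show "deficit a \<psi> x \<ge> 0" unfolding eq by simp
  show "deficit a \<psi> x = 0 \<Longrightarrow> lincomb a x \<noteq> 0 \<Longrightarrow> \<psi> x = threshold a x"
    unfolding eq threshold_def by (auto split: if_splits)
qed

lemma deficit_integral:
  assumes dpsi: "det_quantizer N \<psi>"
  shows "integrable N (deficit a \<psi>)"
    and "weight a \<bullet> dist_vec N f (threshold a) - weight a \<bullet> dist_vec N f \<psi>
           = integral\<^sup>L N (deficit a \<psi>)"
proof -
  have sets: "region (threshold a) True \<in> sets N" "region \<psi> True \<in> sets N"
    using region_sets[OF threshold_det] region_sets[OF dpsi] by auto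
  note ints = score_integral(1)[OF sets(1), of a] score_integral(1)[OF sets(2), of a]
  show "integrable N (deficit a \<psi>)"
    unfolding deficit_def[abs_def] using ints by (rule Bochner_Integration.integrable_diff)
  show "weight a \<bullet> dist_vec N f (threshold a) - weight a \<bullet> dist_vec N f \<psi>
          = integral\<^sup>L N (deficit a \<psi>)"
    unfolding deficit_def[abs_def] inner_weight dist_vec_nth
    using score_integral(2)[OF sets(1)] score_integral(2)[OF sets(2)] ints
    by simp
qed

lemma threshold_score_max:
  assumes "det_quantizer N \<psi>"
  shows "weight a \<bullet> dist_vec N f \<psi> \<le> weight a \<bullet> dist_vec N f (threshold a)"
proof -
  have "integral\<^sup>L N (deficit a \<psi>) \<ge> 0"
    using deficit_pointwise(1) by (intro integral_nonneg_AE) auto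
  then show ?thesis using deficit_integral(2)[OF assms, of a] by simp
qed

lemma score_max_AE_threshold:
  assumes dpsi: "det_quantizer N \<psi>"
    and eq: "weight a \<bullet> dist_vec N f \<psi> = weight a \<bullet> dist_vec N f (threshold a)"
  shows "AE x in N. lincomb a x \<noteq> 0 \<longrightarrow> \<psi> x = threshold a x"
proof -
  have "integral\<^sup>L N (deficit a \<psi>) = 0" using deficit_integral(2)[OF dpsi, of a] eq by simp
  then have "AE x in N. deficit a \<psi> x = 0"
    using integral_nonneg_eq_0_iff_AE[OF deficit_integral(1)[OF dpsi]] deficit_pointwise(1)
    by auto
  then show ?thesis
    by (rule AE_mp) (use deficit_pointwise(2) in blast)
qed

lemma dist_vec_eq_off_ties:
  assumes dpsi: "det_quantizer N \<psi>" and dphi: "det_quantizer N \<phi>" and "ties_null a"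
    and agree: "AE x in N. lincomb a x \<noteq> 0 \<longrightarrow> \<psi> x = \<phi> x"
  shows "dist_vec N f \<psi> = dist_vec N f \<phi>"
proof (rule vec_eq_iff[THEN iffD2], intro allI)
  fix k :: "'m \<times> bool"
  obtain m b where k: "k = (m, b)" by (cases k)
  define Z where "Z = {x \<in> space N. lincomb a x = 0}"
  have Z: "Z \<in> sets N" unfolding Z_def by measurable
  have "(\<integral>x. indicator Z x * f m x \<partial>N) = 0"
    using \<open>ties_null a\<close> prob_st_integral[OF Z] by (simp add: ties_null_def Z_def)
  then have "AE x in N. indicator Z x * f m x = 0"
    using integral_nonneg_eq_0_iff_AE[OF indicator_f_integrable[OF Z]] f_nonneg
    by (auto split: split_indicator)
  with agree have "AE x in N. indicator (region \<psi> b) x * f m x = indicator (region \<phi> b) x * f m x"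
  proof eventually_elim
    case (elim x)
    show ?case
    proof (cases "x \<in> space N \<and> lincomb a x \<noteq> 0")
      case True
      then show ?thesis using elim(1) by (simp add: indicator_def region_def)
    next
      case False
      then have "indicator Z x * f m x = 0 \<longrightarrow> f m x = 0 \<or> x \<notin> space N"
        by (auto simp: Z_def)
      then show ?thesis using elim(2) by (auto simp: region_def)
    qed
  qed
  then show "dist_vec N f \<psi> $ k = dist_vec N f \<phi> $ k"
    unfolding k dist_vec_nth prob_st_integral[OF region_sets[OF dpsi]]
      prob_st_integral[OF region_sets[OF dphi]]
    by (intro integral_cong_AE borel_measurable_integrable indicator_f_integrable region_sets
        dpsi dphi)
qed

lemma Qbar_score_deficit:
  assumes rq: "rand_quantizer N p phis" and u: "(\<lambda>j. p j *\<^sub>R dist_vec N f (phis j)) sums u"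
  shows "(\<lambda>j. p j * (weight a \<bullet> dist_vec N f (threshold a) - weight a \<bullet> dist_vec N f (phis j)))
           sums (weight a \<bullet> dist_vec N f (threshold a) - weight a \<bullet> u)"
    and "\<And>j. p j * (weight a \<bullet> dist_vec N f (threshold a) - weight a \<bullet> dist_vec N f (phis j)) \<ge> 0"
proof -
  have ps: "p sums 1" using rq by (simp add: rand_quantizer_def)
  have "(\<lambda>j. p j * (weight a \<bullet> dist_vec N f (phis j))) sums (weight a \<bullet> u)"
    using bounded_linear.sums[OF bounded_linear_inner_right u] by simp
  then show "(\<lambda>j. p j * (weight a \<bullet> dist_vec N f (threshold a) - weight a \<bullet> dist_vec N f (phis j)))
           sums (weight a \<bullet> dist_vec N f (threshold a) - weight a \<bullet> u)"
    using sums_diff[OF sums_mult2[OF ps]] by (simp add: right_diff_distrib)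
  show "p j * (weight a \<bullet> dist_vec N f (threshold a) - weight a \<bullet> dist_vec N f (phis j)) \<ge> 0" for j
    using rq threshold_score_max by (simp add: rand_quantizer_def)
qed

lemma Qbar_score_max:
  assumes "u \<in> Qbar N f"
  shows "weight a \<bullet> u \<le> weight a \<bullet> dist_vec N f (threshold a)"
proof -
  obtain p phis where rq: "rand_quantizer N p phis"
    and u: "(\<lambda>j. p j *\<^sub>R dist_vec N f (phis j)) sums u"
    using assms unfolding Qbar_eq by blast
  note deficit = Qbar_score_deficit[OF rq u, where a=a]
  have "0 \<le> weight a \<bullet> dist_vec N f (threshold a) - weight a \<bullet> u"
    by (rule sums_le[OF _ sums_zero deficit(1)]) (rule deficit(2))
  then show ?thesis by simp
qed

lemma Qbar_score_max_unique:
  assumes "u \<in> Qbar N f" and "ties_null a"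
    and eq: "weight a \<bullet> u = weight a \<bullet> dist_vec N f (threshold a)"
  shows "u = dist_vec N f (threshold a)"
proof -
  let ?T = "dist_vec N f (threshold a)"
  obtain p phis where rq: "rand_quantizer N p phis"
    and u: "(\<lambda>j. p j *\<^sub>R dist_vec N f (phis j)) sums u"
    using assms(1) unfolding Qbar_eq by blast
  note deficit = Qbar_score_deficit[OF rq u, where a=a]
  have "(\<lambda>j. p j * (weight a \<bullet> ?T - weight a \<bullet> dist_vec N f (phis j))) sums 0"
    (is "?gap sums 0") using deficit(1) eq by simp
  then have "suminf ?gap = 0" and "summable ?gap" by (auto simp: sums_iff)
  then have zero: "?gap j = 0" for j
    using suminf_eq_zero_iff[of ?gap] deficit(2) by simp
  have "p j *\<^sub>R dist_vec N f (phis j) = p j *\<^sub>R ?T" for j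
  proof (cases "p j = 0")
    case False
    have det: "det_quantizer N (phis j)" using rq by (simp add: rand_quantizer_def)
    have "weight a \<bullet> dist_vec N f (phis j) = weight a \<bullet> ?T" using zero[of j] False by simp
    then have "dist_vec N f (phis j) = ?T"
      by (intro dist_vec_eq_off_ties[OF det threshold_det \<open>ties_null a\<close>]
          score_max_AE_threshold[OF det])
    then show ?thesis by simp
  qed simp
  then have "(\<lambda>j. p j *\<^sub>R ?T) sums u" using u by (simp only:)
  moreover have "(\<lambda>j. p j *\<^sub>R ?T) sums ?T"
    using sums_scaleR_left[of p 1 ?T] rq by (simp add: rand_quantizer_def)
  ultimately show ?thesis by (rule sums_unique2)
qed

text \<open>The vector of a threshold rule with null ties is exposed, hence extreme.\<close>
lemma threshold_extreme:
  assumes "ties_null a"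
  shows "dist_vec N f (threshold a) extreme_point_of Qbar N f"
proof (rule extreme_point_of_Int_supporting_hyperplane_le)
  show "Qbar N f \<inter> {x. weight a \<bullet> x = weight a \<bullet> dist_vec N f (threshold a)}
        = {dist_vec N f (threshold a)}"
    using Qbar_score_max_unique[OF _ assms] dist_vec_in_Qbar[OF threshold_det] by blast
qed (rule Qbar_score_max)

lemma ULQ_extreme: "is_ULQ N f \<phi> \<Longrightarrow> dist_vec N f \<phi> extreme_point_of Qbar N f"
  using threshold_extreme dist_vec_cong by (metis is_ULQ_iff)

lemma extreme_score_max:
  assumes "v extreme_point_of Qbar N f"
  obtains a where "a \<noteq> (\<lambda>_. 0)" and "\<And>u. u \<in> Qbar N f \<Longrightarrow> weight a \<bullet> u \<le> weight a \<bullet> v"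
proof -
  obtain c where le: "\<And>u. u \<in> Qbar N f \<Longrightarrow> c \<bullet> u \<le> c \<bullet> v"
    and less: "\<exists>u\<in>Qbar N f. c \<bullet> u < c \<bullet> v"
    using extreme_point_nonconstant_support[OF Qbar_convex assms Qbar_not_singleton] by blast
  define a where "a m = c $ (m, True) - c $ (m, False)" for m
  have c_weight: "c \<bullet> u = (\<Sum>m\<in>UNIV. c $ (m, False)) + weight a \<bullet> u" if "u \<in> Qbar N f" for u
  proof -
    have "c \<bullet> u = (\<Sum>m\<in>UNIV. \<Sum>b\<in>UNIV. c $ (m, b) * u $ (m, b))"
      by (rule inner_vec_pairs)
    also have "\<dots> = (\<Sum>m\<in>UNIV. c $ (m, False) + a m * u $ (m, True))"
      by (intro sum.cong refl) (simp add: UNIV_bool a_def Qbar_complement[OF that] algebra_simps)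
    finally show ?thesis by (simp add: inner_weight sum.distrib)
  qed
  have v: "v \<in> Qbar N f" using assms by (simp add: extreme_point_of_def)
  have "a \<noteq> (\<lambda>_. 0)"
    using less c_weight v by (auto simp: inner_weight)
  moreover have "weight a \<bullet> u \<le> weight a \<bullet> v" if "u \<in> Qbar N f" for u
    using le[OF that] c_weight[OF that] c_weight[OF v] by simp
  ultimately show ?thesis using that by blast
qed

lemma extreme_ULQ:
  assumes li: "lin_indep_dens N f" and v: "v extreme_point_of Qbar N f"
  shows "v \<in> Q_U N f"
proof -
  obtain a where "a \<noteq> (\<lambda>_. 0)" and max: "\<And>u. u \<in> Qbar N f \<Longrightarrow> weight a \<bullet> u \<le> weight a \<bullet> v"
    using extreme_score_max[OF v] by blast
  then have ties: "ties_null a" using lin_indep_ties_null[OF li] by blast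
  have "v \<in> Qbar N f" using v by (simp add: extreme_point_of_def)
  then have "v = dist_vec N f (threshold a)"
    using Qbar_score_max_unique[OF _ ties] Qbar_score_max max[OF dist_vec_in_Qbar[OF threshold_det]]
    by (simp add: order_antisym)
  moreover have "is_ULQ N f (threshold a)" using ties threshold_det by (auto simp: is_ULQ_iff)
  ultimately show ?thesis by (auto simp: Q_U_def)
qed

end

text \<open>Main result: with binary messages and linearly independent densities, the extreme
  points of Qbar are exactly the ULQ vectors.\<close>
theorem lemmaA1:
  fixes N :: "'a measure" and f :: "'m::finite \<Rightarrow> 'a \<Rightarrow> real"
  assumes "sigma_finite_measure N"
    and "\<And>m. f m \<in> borel_measurable N"
    and "\<And>m x. x \<in> space N \<Longrightarrow> f m x \<ge> 0"
    and "\<And>m. (\<integral>\<^sup>+ x. ennreal (f m x) \<partial>N) = 1"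
    and "lin_indep_dens N f"
  shows "Q_alpha N f = Q_U N f"
proof -
  interpret density_model N f using assms(2-4) by unfold_locales
  show ?thesis
  proof
    show "Q_alpha N f \<subseteq> Q_U N f" using extreme_ULQ[OF assms(5)] by (auto simp: Q_alpha_def)
    show "Q_U N f \<subseteq> Q_alpha N f" using ULQ_extreme by (auto simp: Q_alpha_def Q_U_def)
  qed
qed

end
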